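(* Let $a \in \mathbb{R}\setminus\{0\}$, $m>0$ and $b, p \in \mathbb{R}^{+}$. Define $$\mathcal{F}(1,m,a,b,p) = \int_0^\infty Q_m(a\sqrt{x}, b)\, e^{-px}\,{\rm d}x .$$ Then $$\mathcal{F}(1,m,a,b,p) = \frac{\Gamma\!\left(m,\frac{b^2}{2}\right)}{p\,\Gamma(m)} + \frac{a^2\, e^{-\frac{pb^2}{a^2+2p}}\,\gamma\!\left(m,\frac{a^2b^2}{2a^2+4p}\right)}{p\, a^{2m}\,\Gamma(m)\,(a^2+2p)^{1-m}}.$$
   Context: $Q_m(\alpha,\beta)$ is the generalized Marcum $Q$-function of real order $m>0$, $Q_m(\alpha,\beta) = \alpha^{1-m}\int_\beta^\infty t^{m} e^{-(t^2+\alpha^2)/2} I_{m-1}(\alpha t)\,{\rm d}t$, where $I_{\nu}$ is the modified Bessel function of the first kind. $\Gamma$ is the Euler Gamma function, $\Gamma(s,x)=\int_x^\infty t^{s-1}e^{-t}\,{\rm d}t$ is the upper incomplete gamma function and $\gamma(s,x)=\int_0^x t^{s-1}e^{-t}\,{\rm d}t$ is the lower incomplete gamma function. *)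

theory Defs
  imports "HOL-Analysis.Analysis"
begin

text \<open>Modified Bessel function of the first kind, via its power series
  (used for positive arguments z > 0 and real order nu > -1).\<close>
definition bessel_I :: "real \<Rightarrow> real \<Rightarrow> real" where
  "bessel_I nu z = (\<Sum>k. (z / 2) powr (2 * real k + nu) / (fact k * Gamma (real k + nu + 1)))"

text \<open>Generalized Marcum Q-function of real order m > 0.
  For alpha <> 0 this is alpha^(1-m) * int_beta^inf t^m exp(-(t^2+alpha^2)/2) I_(m-1)(alpha t) dt;
  the integrand is even in alpha, so |alpha| is used (this makes sense of alpha < 0).
  For alpha = 0 the (continuous) limiting value is used.\<close>
definition marcum_Q :: "real \<Rightarrow> real \<Rightarrow> real \<Rightarrow> real" where
  "marcum_Q m \<alpha> \<beta> =
    (if \<alpha> \<noteq> 0 then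
       \<bar>\<alpha>\<bar> powr (1 - m) *
       (LBINT t:{\<beta><..}. t powr m * exp (- (t\<^sup>2 + \<alpha>\<^sup>2) / 2) * bessel_I (m - 1) (\<bar>\<alpha>\<bar> * t))
     else
       (LBINT t:{\<beta><..}. t powr m * exp (- (t\<^sup>2) / 2) * (t / 2) powr (m - 1) / Gamma m))"

definition upper_gamma :: "real \<Rightarrow> real \<Rightarrow> real" where
  "upper_gamma s x = (LBINT t:{x<..}. t powr (s - 1) * exp (- t))"

definition lower_gamma :: "real \<Rightarrow> real \<Rightarrow> real" where
  "lower_gamma s x = (LBINT t:{0<..<x}. t powr (s - 1) * exp (- t))"

end

theory Submission
  imports Defs
begin

text \<open>Expanding the Bessel function in its power series and integrating term by term shows that
  Q_m(alpha, b) is a Poisson mixture, with weights exp(-lambda) lambda^k / k! for lambda = alpha^2/2,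
  of the regularized upper incomplete gamma functions U_k = Gamma(k + m, y) / Gamma(k + m), y = b^2/2.
  For alpha^2 = a^2 x the k-th term is a multiple of x^k exp(-a^2 x / 2), whose Laplace transform is
  elementary, so the integral equals sum_k U_k q^k / s with s = p + a^2/2 and q = a^2 / (a^2 + 2p).
  The recurrence U_k = U_0 + exp(-y) sum_{j<k} y^(m+j) / Gamma(m + j + 1) splits this into a geometric
  series, giving the Gamma(m, y) term, and a Cauchy product with the generating function
  sum_j y^(m+j) q^j / Gamma(m + j + 1), which is again a lower incomplete gamma function, at q y.\<close>

lemma nn_integral_sums:
  fixes f :: "nat \<Rightarrow> 'a \<Rightarrow> real"
  assumes [measurable]: "\<And>k. f k \<in> borel_measurable M"
    and nonneg: "\<And>k x. 0 \<le> f k x"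
    and sums: "\<And>x. x \<in> space M \<Longrightarrow> (\<lambda>k. f k x) sums g x"
  shows "(\<integral>\<^sup>+x. ennreal (g x) \<partial>M) = (\<Sum>k. \<integral>\<^sup>+x. ennreal (f k x) \<partial>M)"
proof -
  have "(\<integral>\<^sup>+x. ennreal (g x) \<partial>M) = (\<integral>\<^sup>+x. (\<Sum>k. ennreal (f k x)) \<partial>M)"
    using nonneg sums by (intro nn_integral_cong) (metis suminf_ennreal_eq)
  also have "\<dots> = (\<Sum>k. \<integral>\<^sup>+x. ennreal (f k x) \<partial>M)"
    by (rule nn_integral_suminf) simp
  finally show ?thesis .
qed

lemma integral_sums_nonneg:
  fixes f :: "nat \<Rightarrow> 'a \<Rightarrow> real"
  assumes [measurable]: "\<And>k. f k \<in> borel_measurable M"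
    and nonneg: "\<And>k x. 0 \<le> f k x"
    and sums: "\<And>x. x \<in> space M \<Longrightarrow> (\<lambda>k. f k x) sums g x"
    and integrals: "\<And>k. (\<integral>\<^sup>+x. ennreal (f k x) \<partial>M) = ennreal (c k)"
    and c_nonneg: "\<And>k. 0 \<le> c k" and c_sums: "c sums v"
  shows "(\<integral>\<^sup>+x. ennreal (g x) \<partial>M) = ennreal v" and "integral\<^sup>L M g = v"
proof -
  have "(\<integral>\<^sup>+x. ennreal (g x) \<partial>M) = (\<Sum>k. ennreal (c k))"
    using nn_integral_sums[OF assms(1-3)] by (simp only: integrals)
  also have "\<dots> = ennreal v"
    using c_nonneg c_sums by (rule suminf_ennreal_eq)
  finally show nn: "(\<integral>\<^sup>+x. ennreal (g x) \<partial>M) = ennreal v" .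
  have "(\<lambda>x. \<Sum>k. f k x) \<in> borel_measurable M"
    by measurable
  then have "g \<in> borel_measurable M"
    by (rule measurable_cong[THEN iffD1, rotated]) (simp add: sums_unique[OF sums])
  moreover have "AE x in M. 0 \<le> g x"
    using sums_le[OF _ sums_zero sums] nonneg by (intro AE_I2) simp
  moreover have "0 \<le> v"
    using sums_le[OF _ sums_zero c_sums] c_nonneg by simp
  ultimately show "integral\<^sup>L M g = v"
    by (simp add: integral_eq_nn_integral nn)
qed

lemma nn_integral_powr_times_power_diff:
  fixes \<sigma> z :: real and n :: nat
  assumes "\<sigma> > 0" "z > 0"
  shows "(\<integral>\<^sup>+t. ennreal (indicator {0<..<z} t * (t powr (\<sigma> - 1) * (z - t) ^ n)) \<partial>lborel)
       = ennreal (z powr (\<sigma> + n) * Beta \<sigma> (n + 1))"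
proof -
  have "((\<lambda>u. u powr (\<sigma> - 1) * (1 - u) powr (real (n + 1) - 1)) has_integral Beta \<sigma> (n + 1)) {0<..<1}"
    using has_integral_Beta_real[of \<sigma> "real (n + 1)"] assms by (simp add: has_integral_Icc_iff_Ioo)
  then have "((\<lambda>u. u powr (\<sigma> - 1) * (1 - u) ^ n) has_integral Beta \<sigma> (n + 1)) {0<..<1}"
    by (rule has_integral_spike_finite[of "{}", rotated 2]) (auto simp: powr_realpow)
  from nn_integral_has_integral_lebesgue[OF _ this]
  have Beta: "(\<integral>\<^sup>+u. ennreal (indicator {0<..<1} u * (u powr (\<sigma> - 1) * (1 - u) ^ n)) \<partial>lborel)
      = ennreal (Beta \<sigma> (n + 1))"
    by simp
  have scale: "ennreal (indicator {0<..<z} (z * u) * ((z * u) powr (\<sigma> - 1) * (z - z * u) ^ n))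
      = ennreal (z powr (\<sigma> - 1) * z ^ n) * ennreal (indicator {0<..<1} u * (u powr (\<sigma> - 1) * (1 - u) ^ n))"
    for u
  proof (cases "0 < u \<and> u < 1")
    case True
    then have "(z * u) powr (\<sigma> - 1) * (z - z * u) ^ n = (z powr (\<sigma> - 1) * z ^ n) * (u powr (\<sigma> - 1) * (1 - u) ^ n)"
      using assms by (simp add: powr_mult power_mult_distrib[symmetric] right_diff_distrib)
    with True assms show ?thesis by (simp add: ennreal_mult'[symmetric])
  next
    case False
    then have "z * u \<notin> {0<..<z}"
      using assms by (auto simp: mult_less_cancel_left1 zero_less_mult_iff)
    with False show ?thesis by (auto simp: indicator_def)
  qed
  have "(\<integral>\<^sup>+t. ennreal (indicator {0<..<z} t * (t powr (\<sigma> - 1) * (z - t) ^ n)) \<partial>lborel)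
      = ennreal z * (\<integral>\<^sup>+u. ennreal (indicator {0<..<z} (z * u) * ((z * u) powr (\<sigma> - 1) * (z - z * u) ^ n)) \<partial>lborel)"
    using assms by (subst nn_integral_real_affine[of _ z 0]) auto
  also have "\<dots> = ennreal z * (ennreal (z powr (\<sigma> - 1) * z ^ n) * ennreal (Beta \<sigma> (n + 1)))"
    unfolding scale by (subst nn_integral_cmult) (simp_all add: Beta)
  also have "\<dots> = ennreal (z powr (\<sigma> + n) * Beta \<sigma> (n + 1))"
  proof -
    have "Beta \<sigma> (n + 1) \<ge> 0"
      using assms by (simp add: Beta_def Gamma_real_pos less_imp_le)
    moreover have "z * (z powr (\<sigma> - 1) * z ^ n) = z powr (\<sigma> + n)"
      using assms by (simp add: powr_add powr_diff powr_realpow)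
    ultimately show ?thesis
      using assms by (simp add: ennreal_mult'[symmetric] mult.assoc)
  qed
  finally show ?thesis .
qed

lemma lower_gamma_sums:
  fixes \<sigma> z :: real
  assumes "\<sigma> > 0" "z > 0"
  shows "(\<lambda>n. exp (- z) * Gamma \<sigma> * z powr (\<sigma> + n) / Gamma (\<sigma> + n + 1)) sums lower_gamma \<sigma> z"
    and "(\<integral>\<^sup>+t. ennreal (indicator {0<..<z} t * (t powr (\<sigma> - 1) * exp (- t))) \<partial>lborel)
      = ennreal (lower_gamma \<sigma> z)"
proof -
  define c where "c n = exp (- z) * Gamma \<sigma> * z powr (\<sigma> + n) / Gamma (\<sigma> + n + 1)" for n :: nat
  define f where "f n t = indicator {0<..<z} t * (t powr (\<sigma> - 1) * (z - t) ^ n) * (exp (- z) / fact n)"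
    for n :: nat and t :: real
  define g where "g t = indicator {0<..<z} t * (t powr (\<sigma> - 1) * exp (- t))" for t :: real
  have f_nonneg: "0 \<le> f n t" for n t
    by (simp add: f_def indicator_def)
  have c_nonneg: "0 \<le> c n" for n
    using assms by (simp add: c_def Gamma_real_pos less_imp_le)
  have f_measurable: "f n \<in> borel_measurable lborel" for n
    unfolding f_def[abs_def] by measurable
  \<comment> \<open>expand \<open>exp (- t) = exp (- z) * exp (z - t)\<close> in powers of \<open>z - t\<close>\<close>
  have f_sums: "(\<lambda>n. f n t) sums g t" for t
  proof -
    let ?C = "indicator {0<..<z} t * t powr (\<sigma> - 1) * exp (- z)"
    have "(\<lambda>n. ?C * ((z - t) ^ n /\<^sub>R fact n)) sums (?C * exp (z - t))"
      by (intro sums_mult exp_converges)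
    moreover have "?C * exp (z - t) = g t"
      by (simp add: g_def mult.assoc exp_add[symmetric])
    moreover have "?C * ((z - t) ^ n /\<^sub>R fact n) = f n t" for n
      by (simp add: f_def divide_inverse mult_ac)
    ultimately show ?thesis
      by simp
  qed
  have f_integral: "(\<integral>\<^sup>+t. ennreal (f n t) \<partial>lborel) = ennreal (c n)" for n
  proof -
    have "z powr (\<sigma> + n) * Beta \<sigma> (n + 1) * (exp (- z) / fact n) = c n"
      by (simp add: c_def Beta_def Gamma_fact add_ac)
    moreover have "0 \<le> Beta \<sigma> (n + 1)"
      using assms by (simp add: Beta_def Gamma_real_pos less_imp_le)
    ultimately have "ennreal (z powr (\<sigma> + n) * Beta \<sigma> (n + 1)) * ennreal (exp (- z) / fact n) = ennreal (c n)"
      by (simp add: ennreal_mult[symmetric])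
    moreover have "ennreal (f n t) = ennreal (indicator {0<..<z} t * (t powr (\<sigma> - 1) * (z - t) ^ n))
        * ennreal (exp (- z) / fact n)" for t
      unfolding f_def by (rule ennreal_mult) (simp_all add: indicator_def)
    ultimately show ?thesis
      using assms by (simp add: nn_integral_multc nn_integral_powr_times_power_diff)
  qed
  have "(\<Sum>n. ennreal (c n)) = (\<integral>\<^sup>+t. ennreal (g t) \<partial>lborel)"
    using nn_integral_sums[of f lborel, OF f_measurable f_nonneg f_sums] by (simp add: f_integral)
  also have "\<dots> \<le> (\<integral>\<^sup>+t. ennreal (indicator {0..} t * t powr (\<sigma> - 1) / exp t) \<partial>lborel)"
    by (intro nn_integral_mono ennreal_leI) (auto simp: g_def indicator_def exp_minus divide_inverse)
  also have "\<dots> = ennreal (Gamma \<sigma>)"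
    using Gamma_conv_nn_integral_real[OF assms(1)] by simp
  finally have "summable c"
    by (intro summable_suminf_not_top c_nonneg) (auto simp: top_unique)
  then have "c sums suminf c"
    by (rule summable_sums)
  note lower = integral_sums_nonneg[of f lborel g c, OF f_measurable f_nonneg f_sums f_integral c_nonneg this]
  have "lower_gamma \<sigma> z = suminf c"
    using lower(2) by (simp add: lower_gamma_def set_lebesgue_integral_def g_def[abs_def])
  with \<open>c sums suminf c\<close> lower(1) show
    "(\<lambda>n. exp (- z) * Gamma \<sigma> * z powr (\<sigma> + n) / Gamma (\<sigma> + n + 1)) sums lower_gamma \<sigma> z"
    "(\<integral>\<^sup>+t. ennreal (indicator {0<..<z} t * (t powr (\<sigma> - 1) * exp (- t))) \<partial>lborel)
      = ennreal (lower_gamma \<sigma> z)"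
    by (simp_all add: c_def[abs_def] g_def)
qed

lemma lower_gamma_nonneg: "0 \<le> lower_gamma \<sigma> z"
  unfolding lower_gamma_def set_lebesgue_integral_def
  by (intro integral_nonneg_AE AE_I2) (simp add: indicator_def)

lemma upper_gamma_nonneg: "0 \<le> upper_gamma \<sigma> y"
  unfolding upper_gamma_def set_lebesgue_integral_def
  by (intro integral_nonneg_AE AE_I2) (simp add: indicator_def)

lemma upper_gamma_eq_Gamma_minus_lower_gamma:
  fixes \<sigma> y :: real
  assumes "\<sigma> > 0" "y > 0"
  shows "upper_gamma \<sigma> y = Gamma \<sigma> - lower_gamma \<sigma> y"
    and "(\<integral>\<^sup>+t. ennreal (indicator {y<..} t * (t powr (\<sigma> - 1) * exp (- t))) \<partial>lborel)
      = ennreal (upper_gamma \<sigma> y)"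
proof -
  define f where "f t = t powr (\<sigma> - 1) * exp (- t)" for t :: real
  let ?upper = "\<integral>\<^sup>+t. ennreal (indicator {y<..} t * f t) \<partial>lborel"
  have "ennreal (Gamma \<sigma>) = (\<integral>\<^sup>+t. ennreal (indicator {0..} t * t powr (\<sigma> - 1) / exp t) \<partial>lborel)"
    using Gamma_conv_nn_integral_real[OF assms(1)] by simp
  also have "\<dots> = (\<integral>\<^sup>+t. ennreal (indicator {0<..<y} t * f t) + ennreal (indicator {y<..} t * f t) \<partial>lborel)"
  proof (rule nn_integral_cong_AE)
    have "AE t in lborel. t \<noteq> 0" "AE t in lborel. t \<noteq> y"
      by (rule AE_lborel_singleton)+
    then show "AE t in lborel. ennreal (indicator {0..} t * t powr (\<sigma> - 1) / exp t)
        = ennreal (indicator {0<..<y} t * f t) + ennreal (indicator {y<..} t * f t)"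
      by eventually_elim (use assms in \<open>auto simp: f_def indicator_def exp_minus divide_inverse\<close>)
  qed
  also have "\<dots> = ennreal (lower_gamma \<sigma> y) + ?upper"
    using lower_gamma_sums(2)[OF assms] by (subst nn_integral_add) (simp_all add: f_def)
  finally have split: "ennreal (Gamma \<sigma>) = ennreal (lower_gamma \<sigma> y) + ?upper" .
  then obtain r where r: "?upper = ennreal r" "0 \<le> r"
    by (metis ennreal_add_eq_top ennreal_cases ennreal_neq_top)
  have "upper_gamma \<sigma> y = r"
    using r unfolding upper_gamma_def set_lebesgue_integral_def f_def
    by (subst integral_eq_nn_integral) (simp_all add: indicator_def)
  moreover have "Gamma \<sigma> = lower_gamma \<sigma> y + r"
    using split r lower_gamma_nonneg Gamma_real_pos[OF assms(1)]
    by (simp add: ennreal_plus[symmetric] del: ennreal_plus)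
  ultimately show "upper_gamma \<sigma> y = Gamma \<sigma> - lower_gamma \<sigma> y" "?upper = ennreal (upper_gamma \<sigma> y)"
    using r by simp_all
qed

lemma upper_gamma_le_Gamma: "\<sigma> > 0 \<Longrightarrow> y > 0 \<Longrightarrow> upper_gamma \<sigma> y \<le> Gamma \<sigma>"
  using upper_gamma_eq_Gamma_minus_lower_gamma(1) lower_gamma_nonneg by simp

lemma lower_gamma_regularized_sums:
  fixes \<sigma> z :: real
  assumes "\<sigma> > 0" "z > 0"
  shows "(\<lambda>n. exp (- z) * z powr (\<sigma> + n) / Gamma (\<sigma> + n + 1)) sums (lower_gamma \<sigma> z / Gamma \<sigma>)"
  using sums_divide[OF lower_gamma_sums(1)[OF assms], of "Gamma \<sigma>"] Gamma_real_pos[OF assms(1)]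
  by simp

lemma upper_gamma_plus_one:
  fixes \<sigma> y :: real
  assumes "\<sigma> > 0" "y > 0"
  shows "upper_gamma (\<sigma> + 1) y / Gamma (\<sigma> + 1)
       = upper_gamma \<sigma> y / Gamma \<sigma> + exp (- y) * y powr \<sigma> / Gamma (\<sigma> + 1)"
proof -
  define t where "t n = exp (- y) * y powr (\<sigma> + n) / Gamma (\<sigma> + n + 1)" for n :: nat
  have "(\<lambda>n. t (Suc n)) sums (lower_gamma (\<sigma> + 1) y / Gamma (\<sigma> + 1))"
    using lower_gamma_regularized_sums[of "\<sigma> + 1" y] assms by (simp add: t_def add_ac)
  then have "t sums (lower_gamma (\<sigma> + 1) y / Gamma (\<sigma> + 1) + t 0)"
    by (simp add: sums_Suc_iff)
  moreover have "t sums (lower_gamma \<sigma> y / Gamma \<sigma>)"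
    unfolding t_def by (rule lower_gamma_regularized_sums[OF assms])
  ultimately have "lower_gamma \<sigma> y / Gamma \<sigma> = lower_gamma (\<sigma> + 1) y / Gamma (\<sigma> + 1) + t 0"
    by (rule sums_unique2[rotated])
  moreover have "Gamma \<sigma> \<noteq> 0" "Gamma (\<sigma> + 1) \<noteq> 0"
    using assms by (auto simp: Gamma_eq_zero_iff dest: nonpos_Ints_nonpos)
  ultimately show ?thesis
    using assms by (simp add: upper_gamma_eq_Gamma_minus_lower_gamma(1) t_def diff_divide_distrib)
qed

lemma upper_gamma_plus_nat:
  fixes \<sigma> y :: real and k :: nat
  assumes "\<sigma> > 0" "y > 0"
  shows "upper_gamma (\<sigma> + k) y / Gamma (\<sigma> + k)
       = upper_gamma \<sigma> y / Gamma \<sigma> + exp (- y) * (\<Sum>j<k. y powr (\<sigma> + j) / Gamma (\<sigma> + j + 1))"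
proof (induction k)
  case (Suc k)
  have "\<sigma> + real k > 0"
    using assms by simp
  then show ?case
    using upper_gamma_plus_one[of "\<sigma> + k" y] assms Suc.IH
    by (simp add: add_ac ring_distribs)
qed simp

lemma bessel_I_sums:
  fixes \<nu> z :: real
  assumes \<nu>: "\<nu> > -1" and z: "z > 0"
  shows "(\<lambda>k. (z / 2) powr \<nu> * ((z / 2)\<^sup>2) ^ k / (fact k * Gamma (k + \<nu> + 1))) sums bessel_I \<nu> z"
proof -
  define u where "u = (z / 2)\<^sup>2"
  define f where "f k = (z / 2) powr \<nu> * u ^ k / (fact k * Gamma (k + \<nu> + 1))" for k :: nat
  have Gamma_pos: "Gamma (k + \<nu> + 1) > 0" for k :: nat
    using \<nu> by simp
  have f_pos: "f k > 0" for k
    using z Gamma_pos[of k] by (simp add: f_def u_def)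
  have "summable f"
  proof (rule summable_ratio_test[of "1 / 2" "nat \<lceil>2 * u\<rceil> + 1"])
    fix n :: nat
    assume "nat \<lceil>2 * u\<rceil> + 1 \<le> n"
    then have n: "2 * u \<le> real n" "1 \<le> real n"
      by linarith+
    have "n + \<nu> + 1 \<notin> \<int>\<^sub>\<le>\<^sub>0"
      using \<nu> nonpos_Ints_nonpos[of "n + \<nu> + 1"] by linarith
    from Gamma_plus1[OF this] have "Gamma (Suc n + \<nu> + 1) = (n + \<nu> + 1) * Gamma (n + \<nu> + 1)"
      by (simp add: add_ac)
    then have "f (Suc n) = f n * (u / ((real n + 1) * (n + \<nu> + 1)))"
      using Gamma_pos[of n] \<nu> by (simp add: f_def field_simps)
    also have "u / ((real n + 1) * (n + \<nu> + 1)) \<le> 1 / 2"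
    proof -
      have "real n + 1 \<le> (real n + 1) * (n + \<nu> + 1)"
        using mult_left_mono[of 1 "n + \<nu> + 1" "real n + 1"] n \<nu> by simp
      then have "2 * u \<le> (real n + 1) * (n + \<nu> + 1)"
        using n by linarith
      then show ?thesis
        using n \<nu> by (simp add: divide_le_eq)
    qed
    then have "f n * (u / ((real n + 1) * (n + \<nu> + 1))) \<le> f n * (1 / 2)"
      using f_pos[of n] by (intro mult_left_mono) auto
    finally show "norm (f (Suc n)) \<le> 1 / 2 * norm (f n)"
      using f_pos[of n] f_pos[of "Suc n"] by simp
  qed simp
  moreover have "(\<lambda>k. (z / 2) powr (2 * real k + \<nu>) / (fact k * Gamma (real k + \<nu> + 1))) = f"
  proof
    fix k :: nat
    have "(z / 2) powr (real (2 * k)) = u ^ k"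
      using z by (subst powr_realpow) (simp_all add: u_def power_mult)
    then show "(z / 2) powr (2 * real k + \<nu>) / (fact k * Gamma (real k + \<nu> + 1)) = f k"
      by (simp add: f_def powr_add)
  qed
  ultimately have "f sums bessel_I \<nu> z"
    unfolding bessel_I_def by (simp add: summable_sums)
  then show ?thesis
    by (simp add: f_def[abs_def] u_def)
qed

lemma nn_integral_Icc_tendsto_Ici:
  fixes f :: "real \<Rightarrow> real" and u :: "nat \<Rightarrow> real" and a :: real
  assumes [measurable]: "f \<in> borel_measurable borel"
    and f_nonneg: "\<And>x. a \<le> x \<Longrightarrow> 0 \<le> f x" and "mono u" and u: "filterlim u at_top sequentially"
  shows "(\<lambda>n. \<integral>\<^sup>+x. ennreal (f x * indicator {a..u n} x) \<partial>lborel)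
           \<longlonglongrightarrow> (\<integral>\<^sup>+x. ennreal (f x * indicator {a..} x) \<partial>lborel)"
proof (rule nn_integral_LIMSEQ)
  show "incseq (\<lambda>n x. ennreal (f x * indicator {a..u n} x))"
    using \<open>mono u\<close> f_nonneg
    by (auto simp: incseq_def le_fun_def mono_def indicator_def intro!: ennreal_leI dest: order_trans)
  fix x :: real
  have "eventually (\<lambda>n. x \<le> u n) sequentially"
    using u by (simp add: filterlim_at_top)
  then show "(\<lambda>n. ennreal (f x * indicator {a..u n} x)) \<longlonglongrightarrow> ennreal (f x * indicator {a..} x)"
    by (rule tendsto_eventually[OF eventually_mono]) (simp add: indicator_def)
qed simp

lemma nn_integral_substitution_half_square:
  fixes \<phi> :: "real \<Rightarrow> real" and b :: real
  assumes [measurable]: "\<phi> \<in> borel_measurable borel" and \<phi>_nonneg: "\<And>w. 0 \<le> \<phi> w" and b: "b \<ge> 0"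
  shows "(\<integral>\<^sup>+t. ennreal (indicator {b<..} t * (\<phi> (t\<^sup>2 / 2) * t)) \<partial>lborel)
       = (\<integral>\<^sup>+w. ennreal (indicator {b\<^sup>2 / 2<..} w * \<phi> w) \<partial>lborel)"
proof -
  define u where "u n = b + real n" for n
  have "mono u" "mono (\<lambda>n. (u n)\<^sup>2 / 2)"
    using b by (auto simp: mono_def u_def intro!: power_mono)
  have u_lim: "filterlim u at_top sequentially"
    unfolding u_def by (rule filterlim_tendsto_add_at_top[OF tendsto_const filterlim_real_sequentially])
  have "filterlim (\<lambda>n. (u n)\<^sup>2 / 2) at_top sequentially"
    using u_lim
  proof (rule filterlim_at_top_mono)
    have "x \<le> x\<^sup>2 / 2" if "2 \<le> x" for x :: real
      using mult_right_mono[OF that, of x] that by (simp add: power2_eq_square)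
    moreover have "eventually (\<lambda>n. 2 \<le> u n) sequentially"
      using u_lim by (simp add: filterlim_at_top)
    ultimately show "eventually (\<lambda>n. u n \<le> (u n)\<^sup>2 / 2) sequentially"
      by (auto elim: eventually_mono)
  qed
  then have "(\<lambda>n. \<integral>\<^sup>+w. ennreal (\<phi> w * indicator {b\<^sup>2 / 2..(u n)\<^sup>2 / 2} w) \<partial>lborel)
      \<longlonglongrightarrow> (\<integral>\<^sup>+w. ennreal (\<phi> w * indicator {b\<^sup>2 / 2..} w) \<partial>lborel)"
    using \<phi>_nonneg \<open>mono (\<lambda>n. (u n)\<^sup>2 / 2)\<close> by (intro nn_integral_Icc_tendsto_Ici) auto
  moreover have "(\<integral>\<^sup>+w. ennreal (\<phi> w * indicator {b\<^sup>2 / 2..(u n)\<^sup>2 / 2} w) \<partial>lborel)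
      = (\<integral>\<^sup>+t. ennreal (\<phi> (t\<^sup>2 / 2) * t * indicator {b..u n} t) \<partial>lborel)" for n
    using b by (intro nn_integral_substitution)
      (auto simp: u_def set_borel_measurable_def intro!: derivative_eq_intros continuous_intros)
  moreover have "(\<lambda>n. \<integral>\<^sup>+t. ennreal (\<phi> (t\<^sup>2 / 2) * t * indicator {b..u n} t) \<partial>lborel)
      \<longlonglongrightarrow> (\<integral>\<^sup>+t. ennreal (\<phi> (t\<^sup>2 / 2) * t * indicator {b..} t) \<partial>lborel)"
    using \<phi>_nonneg b u_lim \<open>mono u\<close> by (intro nn_integral_Icc_tendsto_Ici) auto
  ultimately have limits_eq: "(\<integral>\<^sup>+w. ennreal (\<phi> w * indicator {b\<^sup>2 / 2..} w) \<partial>lborel)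
      = (\<integral>\<^sup>+t. ennreal (\<phi> (t\<^sup>2 / 2) * t * indicator {b..} t) \<partial>lborel)"
    by (simp add: LIMSEQ_unique)
  have "(\<integral>\<^sup>+t. ennreal (indicator {b<..} t * (\<phi> (t\<^sup>2 / 2) * t)) \<partial>lborel)
      = (\<integral>\<^sup>+t. ennreal (\<phi> (t\<^sup>2 / 2) * t * indicator {b..} t) \<partial>lborel)"
    by (rule nn_integral_cong_AE, rule eventually_mono[OF AE_lborel_singleton[of b]])
      (auto simp: indicator_def)
  also have "\<dots> = (\<integral>\<^sup>+w. ennreal (indicator {b\<^sup>2 / 2<..} w * \<phi> w) \<partial>lborel)"
    unfolding limits_eq[symmetric]
    by (rule nn_integral_cong_AE, rule eventually_mono[OF AE_lborel_singleton[of "b\<^sup>2 / 2"]])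
      (auto simp: indicator_def)
  finally show ?thesis .
qed

lemma nn_integral_upper_gamma_half_square:
  fixes \<sigma> b :: real
  assumes "\<sigma> > 0" "b > 0"
  shows "(\<integral>\<^sup>+t. ennreal (indicator {b<..} t * ((t\<^sup>2 / 2) powr (\<sigma> - 1) * exp (- (t\<^sup>2 / 2)) * t)) \<partial>lborel)
       = ennreal (upper_gamma \<sigma> (b\<^sup>2 / 2))"
  using nn_integral_substitution_half_square[of "\<lambda>w. w powr (\<sigma> - 1) * exp (- w)" b]
    upper_gamma_eq_Gamma_minus_lower_gamma(2)[of \<sigma> "b\<^sup>2 / 2"] assms
  by simp

lemma marcum_integrand_term:
  fixes m r t :: real and k :: nat
  assumes m: "m > 0" and r: "r > 0" and t: "t > 0"
  shows "t powr m * exp (- (t\<^sup>2 + r\<^sup>2) / 2)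
           * ((r * t / 2) powr (m - 1) * ((r * t / 2)\<^sup>2) ^ k / (fact k * Gamma (k + (m - 1) + 1)))
       = r powr (m - 1) * (exp (- (r\<^sup>2 / 2)) * (r\<^sup>2 / 2) ^ k / fact k)
           * ((t\<^sup>2 / 2) powr (k + m - 1) * exp (- (t\<^sup>2 / 2)) * t / Gamma (k + m))"
    (is "?lhs = ?rhs")
proof -
  have "Gamma (k + m) > 0"
    using m by simp
  then have "?lhs > 0" "?rhs > 0" "ln ?lhs = ln ?rhs"
    using m r t by (simp_all add: ln_mult ln_div ln_realpow algebra_simps) (simp add: field_simps)
  then show ?thesis
    by simp
qed

lemma poisson_weights_sums:
  fixes x :: real
  shows "(\<lambda>k. exp (- x) * x ^ k / fact k) sums 1"
proof -
  have "(\<lambda>k. exp (- x) * (x ^ k /\<^sub>R fact k)) sums (exp (- x) * exp x)"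
    by (intro sums_mult exp_converges)
  then show ?thesis
    by (simp add: exp_minus divide_inverse mult_ac)
qed

lemma marcum_Q_sums:
  fixes m \<alpha> b :: real
  assumes \<alpha>: "\<alpha> \<noteq> 0" and m: "m > 0" and b: "b > 0"
  shows "(\<lambda>k. exp (- \<alpha>\<^sup>2 / 2) * (\<alpha>\<^sup>2 / 2) ^ k / fact k * (upper_gamma (k + m) (b\<^sup>2 / 2) / Gamma (k + m)))
           sums marcum_Q m \<alpha> b"
proof -
  define r where "r = \<bar>\<alpha>\<bar>"
  have r: "r > 0" and \<alpha>_sq: "\<alpha>\<^sup>2 = r\<^sup>2"
    using \<alpha> by (simp_all add: r_def)
  define P where "P k = exp (- (r\<^sup>2 / 2)) * (r\<^sup>2 / 2) ^ k / fact k" for k :: nat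
  define U where "U k = upper_gamma (k + m) (b\<^sup>2 / 2) / Gamma (k + m)" for k :: nat
  define A where "A k = r powr (m - 1) * P k / Gamma (k + m)" for k :: nat
  define B where "B k t = indicator {b<..} t * ((t\<^sup>2 / 2) powr (k + m - 1) * exp (- (t\<^sup>2 / 2)) * t)"
    for k :: nat and t :: real
  define h where "h t = t powr m * exp (- (t\<^sup>2 + \<alpha>\<^sup>2) / 2) * bessel_I (m - 1) (r * t)" for t
  have P_nonneg: "0 \<le> P k" for k
    by (simp add: P_def)
  have U_bounds: "0 \<le> U k" "U k \<le> 1" for k
    using upper_gamma_le_Gamma[of "k + m" "b\<^sup>2 / 2"] m b by (simp_all add: U_def upper_gamma_nonneg)
  have A_nonneg: "0 \<le> A k" and B_nonneg: "0 \<le> B k t" for k t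
    using P_nonneg[of k] m b by (simp_all add: A_def B_def indicator_def)
  have "summable P"
    using sums_summable[OF poisson_weights_sums[of "r\<^sup>2 / 2"]] by (simp add: P_def[abs_def])
  then have PU_summable: "summable (\<lambda>k. P k * U k)"
    by (rule summable_comparison_test'[of _ 0]) (simp add: P_nonneg U_bounds mult_left_le)
  have AB_sums: "(\<lambda>k. A k * B k t) sums (indicator {b<..} t * h t)" for t
  proof (cases "t > b")
    case True
    then have "t > 0"
      using b by simp
    have "(\<lambda>k. t powr m * exp (- (t\<^sup>2 + r\<^sup>2) / 2) * ((r * t / 2) powr (m - 1) * ((r * t / 2)\<^sup>2) ^ k
        / (fact k * Gamma (k + (m - 1) + 1)))) sums h t"
      unfolding h_def \<alpha>_sq using m r \<open>t > 0\<close> by (intro sums_mult bessel_I_sums) auto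
    moreover have "t powr m * exp (- (t\<^sup>2 + r\<^sup>2) / 2) * ((r * t / 2) powr (m - 1) * ((r * t / 2)\<^sup>2) ^ k
        / (fact k * Gamma (k + (m - 1) + 1))) = A k * B k t" for k
      by (subst marcum_integrand_term[OF m r \<open>t > 0\<close>]) (simp add: A_def B_def P_def True)
    ultimately show ?thesis
      using True by simp
  next
    case False
    then show ?thesis
      by (simp add: B_def)
  qed
  have AB_integral: "(\<integral>\<^sup>+t. ennreal (A k * B k t) \<partial>lborel) = ennreal (r powr (m - 1) * (P k * U k))" for k
  proof -
    have "(\<integral>\<^sup>+t. ennreal (A k * B k t) \<partial>lborel) = ennreal (A k) * (\<integral>\<^sup>+t. ennreal (B k t) \<partial>lborel)"
      using A_nonneg B_nonneg by (simp add: ennreal_mult nn_integral_cmult B_def)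
    also have "\<dots> = ennreal (A k) * ennreal (upper_gamma (k + m) (b\<^sup>2 / 2))"
      using nn_integral_upper_gamma_half_square[of "k + m" b] m b by (simp add: B_def)
    also have "\<dots> = ennreal (r powr (m - 1) * (P k * U k))"
      using A_nonneg[of k] upper_gamma_nonneg by (simp add: ennreal_mult[symmetric] A_def U_def mult.assoc)
    finally show ?thesis .
  qed
  have "(LBINT t:{b<..}. h t) = r powr (m - 1) * (\<Sum>k. P k * U k)"
  proof -
    have "(\<lambda>t. A k * B k t) \<in> borel_measurable lborel" for k
      unfolding B_def
      by measurable
    moreover have "(\<lambda>k. r powr (m - 1) * (P k * U k)) sums (r powr (m - 1) * (\<Sum>k. P k * U k))"
      using PU_summable by (intro sums_mult summable_sums)
    ultimately show ?thesis
      using integral_sums_nonneg(2)[of "\<lambda>k t. A k * B k t", OF _ _ AB_sums AB_integral]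
        A_nonneg B_nonneg P_nonneg U_bounds by (simp add: set_lebesgue_integral_def)
  qed
  then have "marcum_Q m \<alpha> b = (\<Sum>k. P k * U k)"
    using \<alpha> r by (simp add: marcum_Q_def h_def r_def[symmetric] powr_add[symmetric])
  with PU_summable show ?thesis
    by (simp add: P_def U_def \<alpha>_sq summable_sums)
qed

lemma nn_integral_power_times_exp_scaled:
  fixes s :: real and k :: nat
  assumes s: "s > 0"
  shows "(\<integral>\<^sup>+x. ennreal (indicator {0<..} x * (x ^ k * exp (- s * x))) \<partial>lborel) = ennreal (fact k / s ^ (k + 1))"
proof -
  have Gamma: "(\<integral>\<^sup>+x. ennreal (indicator {0<..} x * (x ^ k * exp (- x))) \<partial>lborel) = ennreal (fact k)"
  proof -
    have "ennreal (fact k) = (\<integral>\<^sup>+t. ennreal (indicator {0..} t * t powr (1 + real k - 1) / exp t) \<partial>lborel)"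
      using Gamma_conv_nn_integral_real[of "1 + real k"] by (simp add: Gamma_fact)
    also have "\<dots> = (\<integral>\<^sup>+x. ennreal (indicator {0<..} x * (x ^ k * exp (- x))) \<partial>lborel)"
      by (rule nn_integral_cong_AE, rule eventually_mono[OF AE_lborel_singleton[of 0]])
         (auto simp: indicator_def powr_realpow exp_minus divide_inverse)
    finally show ?thesis ..
  qed
  have scale: "ennreal (indicator {0<..} (x / s) * ((x / s) ^ k * exp (- s * (x / s))))
      = ennreal (1 / s ^ k) * ennreal (indicator {0<..} x * (x ^ k * exp (- x)))" for x
    using s by (cases "x > 0") (simp_all add: ennreal_mult[symmetric] power_divide zero_less_divide_iff)
  have "(\<integral>\<^sup>+x. ennreal (indicator {0<..} x * (x ^ k * exp (- s * x))) \<partial>lborel)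
      = ennreal (1 / s) * (\<integral>\<^sup>+x. ennreal (indicator {0<..} (x / s) * ((x / s) ^ k * exp (- s * (x / s)))) \<partial>lborel)"
    using s by (subst nn_integral_real_affine[of _ "1 / s" 0]) simp_all
  also have "\<dots> = ennreal (1 / s) * (ennreal (1 / s ^ k) * ennreal (fact k))"
    unfolding scale by (subst nn_integral_cmult) (simp_all add: Gamma)
  also have "\<dots> = ennreal (fact k / s ^ (k + 1))"
    using s by (simp add: ennreal_mult[symmetric] field_simps)
  finally show ?thesis .
qed

lemma sums_geometric_times_partial_sums:
  fixes a :: "nat \<Rightarrow> real" and q :: real
  assumes a_nonneg: "\<And>j. 0 \<le> a j" and "summable a" and q: "0 \<le> q" "q < 1"
  shows "(\<lambda>k. q ^ k * (\<Sum>j<k. a j)) sums (q / (1 - q) * (\<Sum>j. a j * q ^ j))"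
proof -
  have q_pow: "q ^ j \<le> 1" for j
    using q by (simp add: power_le_one)
  have "summable (\<lambda>j. a j * q ^ j)"
    by (rule summable_comparison_test'[OF \<open>summable a\<close>, of 0]) (simp add: a_nonneg q mult_left_le q_pow)
  then have "summable (\<lambda>j. norm (a j * q ^ Suc j))"
    using summable_mult2[OF \<open>summable (\<lambda>j. a j * q ^ j)\<close>, of q] q a_nonneg by (simp add: abs_mult mult_ac)
  moreover have "summable (\<lambda>j. norm (q ^ j))"
    using q by (simp add: summable_geometric)
  ultimately have "(\<lambda>k. \<Sum>j\<le>k. a j * q ^ Suc j * q ^ (k - j)) sums ((\<Sum>j. a j * q ^ Suc j) * (\<Sum>j. q ^ j))"
    by (rule Cauchy_product_sums)
  moreover have "(\<Sum>j\<le>k. a j * q ^ Suc j * q ^ (k - j)) = q ^ Suc k * (\<Sum>j<Suc k. a j)" for k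
  proof -
    have "a j * q ^ Suc j * q ^ (k - j) = q ^ Suc k * a j" if "j \<le> k" for j
    proof -
      have "a j * q ^ Suc j * q ^ (k - j) = q ^ (Suc j + (k - j)) * a j"
        by (simp add: power_add mult_ac)
      with that show ?thesis
        by simp
    qed
    then have "(\<Sum>j\<le>k. a j * q ^ Suc j * q ^ (k - j)) = (\<Sum>j\<le>k. q ^ Suc k * a j)"
      by (intro sum.cong) simp_all
    then show ?thesis
      by (simp only: sum_distrib_left lessThan_Suc_atMost)
  qed
  moreover have "(\<Sum>j. a j * q ^ Suc j) = q * (\<Sum>j. a j * q ^ j)"
    using suminf_mult[OF \<open>summable (\<lambda>j. a j * q ^ j)\<close>, of q] by (simp add: mult_ac)
  ultimately have "(\<lambda>k. q ^ Suc k * (\<Sum>j<Suc k. a j)) sums (q / (1 - q) * (\<Sum>j. a j * q ^ j))"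
    using q by (simp add: suminf_geometric)
  from sums_Suc_iff[where f = "\<lambda>k. q ^ k * (\<Sum>j<k. a j)", THEN iffD1, OF this]
  show ?thesis
    by simp
qed

lemma lower_gamma_generating_sums:
  fixes \<sigma> y q :: real
  assumes "\<sigma> > 0" "y > 0" "q > 0"
  shows "(\<lambda>j. y powr (\<sigma> + j) / Gamma (\<sigma> + j + 1) * q ^ j)
           sums (exp (q * y) * lower_gamma \<sigma> (q * y) / (Gamma \<sigma> * q powr \<sigma>))"
proof -
  have "(\<lambda>j. exp (q * y) / q powr \<sigma> * (exp (- (q * y)) * (q * y) powr (\<sigma> + j) / Gamma (\<sigma> + j + 1)))
      sums (exp (q * y) / q powr \<sigma> * (lower_gamma \<sigma> (q * y) / Gamma \<sigma>))"
    using assms by (intro sums_mult lower_gamma_regularized_sums) simp_all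
  moreover have "exp (q * y) / q powr \<sigma> * (exp (- (q * y)) * (q * y) powr (\<sigma> + j) / Gamma (\<sigma> + j + 1))
      = y powr (\<sigma> + j) / Gamma (\<sigma> + j + 1) * q ^ j" for j :: nat
    using assms by (simp add: powr_mult powr_add powr_realpow exp_minus field_simps)
  ultimately show ?thesis
    by (simp add: mult_ac)
qed

lemma laplace_marcum_Q_sums:
  fixes a m b p :: real
  assumes a: "a \<noteq> 0" and m: "m > 0" and b: "b > 0" and p: "p > 0"
  defines "c \<equiv> a\<^sup>2 / 2"
  shows "(\<lambda>k. upper_gamma (k + m) (b\<^sup>2 / 2) / Gamma (k + m) * c ^ k / (p + c) ^ (k + 1))
           sums (LBINT x:{0<..}. marcum_Q m (a * sqrt x) b * exp (- p * x))"
proof -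
  define s where "s = p + c"
  define U where "U k = upper_gamma (k + m) (b\<^sup>2 / 2) / Gamma (k + m)" for k :: nat
  define f where "f k x = indicator {0<..} x * (U k * c ^ k / fact k * (x ^ k * exp (- s * x)))"
    for k :: nat and x :: real
  have c: "c > 0"
    using a by (simp add: c_def)
  then have s: "s > 0"
    using p by (simp add: s_def)
  have U_bounds: "0 \<le> U k" "U k \<le> 1" for k
    using upper_gamma_le_Gamma[of "k + m" "b\<^sup>2 / 2"] m b by (simp_all add: U_def upper_gamma_nonneg)
  have f_nonneg: "0 \<le> f k x" for k x
    using U_bounds[of k] c by (simp add: f_def indicator_def)
  have f_sums: "(\<lambda>k. f k x) sums (indicator {0<..} x * (marcum_Q m (a * sqrt x) b * exp (- p * x)))" for x
  proof (cases "x > 0")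
    case True
    then have "(\<lambda>k. exp (- (a * sqrt x)\<^sup>2 / 2) * ((a * sqrt x)\<^sup>2 / 2) ^ k / fact k * U k)
        sums marcum_Q m (a * sqrt x) b"
      unfolding U_def using a m b by (intro marcum_Q_sums) simp_all
    then have "(\<lambda>k. exp (- (a * sqrt x)\<^sup>2 / 2) * ((a * sqrt x)\<^sup>2 / 2) ^ k / fact k * U k * exp (- p * x))
        sums (marcum_Q m (a * sqrt x) b * exp (- p * x))"
      by (rule sums_mult2)
    moreover have "exp (- (a * sqrt x)\<^sup>2 / 2) * ((a * sqrt x)\<^sup>2 / 2) ^ k / fact k * U k * exp (- p * x) = f k x"
      for k
    proof -
      have "(a * sqrt x)\<^sup>2 / 2 = c * x" "- (a * sqrt x)\<^sup>2 / 2 = - (c * x)"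
        using True by (simp_all add: c_def power_mult_distrib)
      moreover have "exp (- s * x) = exp (- (c * x)) * exp (- p * x)"
        by (simp add: s_def exp_add[symmetric] algebra_simps)
      ultimately show ?thesis
        using True by (simp add: f_def power_mult_distrib mult_ac)
    qed
    ultimately show ?thesis
      using True by simp
  qed (simp add: f_def)
  have f_integral: "(\<integral>\<^sup>+x. ennreal (f k x) \<partial>lborel) = ennreal (U k * c ^ k / s ^ (k + 1))" for k
  proof -
    have "ennreal (f k x) = ennreal (U k * c ^ k / fact k) * ennreal (indicator {0<..} x * (x ^ k * exp (- s * x)))" for x
      using U_bounds[of k] c by (cases "x > 0") (simp_all add: f_def ennreal_mult[symmetric])
    then have "(\<integral>\<^sup>+x. ennreal (f k x) \<partial>lborel)
        = ennreal (U k * c ^ k / fact k) * (\<integral>\<^sup>+x. ennreal (indicator {0<..} x * (x ^ k * exp (- s * x))) \<partial>lborel)"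
      by (simp add: nn_integral_cmult del: mult_minus_left)
    also have "\<dots> = ennreal (U k * c ^ k / fact k) * ennreal (fact k / s ^ (k + 1))"
      by (simp only: nn_integral_power_times_exp_scaled[OF s])
    also have "\<dots> = ennreal (U k * c ^ k / s ^ (k + 1))"
      using U_bounds[of k] c s by (simp add: ennreal_mult[symmetric])
    finally show ?thesis .
  qed
  have "summable (\<lambda>k. U k * c ^ k / s ^ (k + 1))"
  proof (rule summable_comparison_test'[of "\<lambda>k. 1 / s * (c / s) ^ k" 0])
    show "summable (\<lambda>k. 1 / s * (c / s) ^ k)"
      using c p by (intro summable_mult[OF summable_geometric]) (simp add: s_def)
    show "norm (U k * c ^ k / s ^ (k + 1)) \<le> 1 / s * (c / s) ^ k" for k
      using U_bounds[of k] c s by (simp add: power_divide divide_right_mono mult_left_le)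
  qed
  then have "(\<lambda>k. U k * c ^ k / s ^ (k + 1)) sums (\<Sum>k. U k * c ^ k / s ^ (k + 1))"
    by (rule summable_sums)
  moreover have "f k \<in> borel_measurable lborel" for k
    unfolding f_def by measurable
  ultimately have "(LBINT x:{0<..}. marcum_Q m (a * sqrt x) b * exp (- p * x)) = (\<Sum>k. U k * c ^ k / s ^ (k + 1))"
    using integral_sums_nonneg(2)[OF _ f_nonneg f_sums f_integral] U_bounds c s
    by (simp add: set_lebesgue_integral_def)
  with \<open>summable (\<lambda>k. U k * c ^ k / s ^ (k + 1))\<close> show ?thesis
    by (simp add: U_def s_def summable_sums)
qed

lemma laplace_series_closed_form:
  fixes a m b p :: real
  assumes a: "a \<noteq> 0" and m: "m > 0" and b: "b > 0" and p: "p > 0"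
  defines "c \<equiv> a\<^sup>2 / 2"
  shows "(\<lambda>k. upper_gamma (k + m) (b\<^sup>2 / 2) / Gamma (k + m) * c ^ k / (p + c) ^ (k + 1))
    sums (upper_gamma m (b\<^sup>2 / 2) / (p * Gamma m) +
      a\<^sup>2 * exp (- p * b\<^sup>2 / (a\<^sup>2 + 2 * p)) * lower_gamma m (a\<^sup>2 * b\<^sup>2 / (2 * a\<^sup>2 + 4 * p))
        / (p * (a\<^sup>2) powr m * Gamma m * (a\<^sup>2 + 2 * p) powr (1 - m)))"
proof -
  define s where "s = p + c"
  define D where "D = a\<^sup>2 + 2 * p"
  define q where "q = c / s"
  define y where "y = b\<^sup>2 / 2"
  define A where "A j = y powr (m + j) / Gamma (m + j + 1)" for j :: nat
  define W where "W = (\<Sum>j. A j * q ^ j)"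
  define U\<^sub>0 where "U\<^sub>0 = upper_gamma m y / Gamma m"
  have c: "c > 0" and y: "y > 0"
    using a b by (simp_all add: c_def y_def)
  have "a\<^sup>2 > 0"
    using a by simp
  then have s: "s > 0" and D: "D > 0"
    unfolding s_def D_def c_def using p by linarith+
  have q: "0 < q" "q < 1" and q_D: "q = a\<^sup>2 / D"
    using c p s by (simp_all add: q_def s_def c_def D_def field_simps)
  have "s * q = c"
    using s by (simp add: q_def)
  then have p_eq: "s * (1 - q) = p"
    by (simp add: s_def algebra_simps)
  have A_nonneg: "0 \<le> A j" for j
    using m by (simp add: A_def)
  have "summable A"
    using sums_summable[OF lower_gamma_generating_sums[OF m y zero_less_one]] by (simp add: A_def[abs_def])
  have W_eq: "W = exp (q * y) * lower_gamma m (q * y) / (Gamma m * q powr m)"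
    unfolding W_def A_def using lower_gamma_generating_sums[OF m y q(1)] by (simp add: sums_iff)
  have term_eq: "upper_gamma (k + m) y / Gamma (k + m) * c ^ k / s ^ (k + 1)
      = U\<^sub>0 / s * q ^ k + exp (- y) / s * (q ^ k * (\<Sum>j<k. A j))" for k :: nat
    using upper_gamma_plus_nat[OF m y, of k] s
    by (simp add: U\<^sub>0_def A_def q_def power_divide add.commute field_simps)
  have "(\<lambda>k. U\<^sub>0 / s * q ^ k + exp (- y) / s * (q ^ k * (\<Sum>j<k. A j)))
      sums (U\<^sub>0 / s * (1 / (1 - q)) + exp (- y) / s * (q / (1 - q) * W))"
    unfolding W_def using q A_nonneg \<open>summable A\<close>
    by (intro sums_add sums_mult geometric_sums sums_geometric_times_partial_sums) auto
  moreover have "U\<^sub>0 / s * (1 / (1 - q)) = upper_gamma m (b\<^sup>2 / 2) / (p * Gamma m)"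
    using p_eq[symmetric] by (simp add: U\<^sub>0_def y_def)
  moreover have "exp (- y) / s * (q / (1 - q) * W)
      = a\<^sup>2 * exp (- p * b\<^sup>2 / D) * lower_gamma m (q * y) / (p * (a\<^sup>2) powr m * Gamma m * D powr (1 - m))"
  proof -
    have exp_eq: "exp (- y) * exp (q * y) = exp (- p * b\<^sup>2 / D)"
      using D by (simp add: q_D y_def D_def exp_add[symmetric] field_simps)
    have powr_eq: "q / q powr m = a\<^sup>2 / ((a\<^sup>2) powr m * D powr (1 - m))"
      using a D by (simp add: q_D powr_divide powr_diff field_simps)
    have "exp (- y) / s * (q / (1 - q) * W)
        = (exp (- y) * exp (q * y)) * (q / q powr m) * lower_gamma m (q * y) / (Gamma m * (s * (1 - q)))"
      using s q by (simp add: W_eq field_simps)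
    also have "\<dots> = a\<^sup>2 * exp (- p * b\<^sup>2 / D) * lower_gamma m (q * y) / (p * (a\<^sup>2) powr m * Gamma m * D powr (1 - m))"
      unfolding exp_eq powr_eq p_eq by (simp add: field_simps)
    finally show ?thesis .
  qed
  ultimately have "(\<lambda>k. upper_gamma (k + m) y / Gamma (k + m) * c ^ k / s ^ (k + 1))
      sums (upper_gamma m (b\<^sup>2 / 2) / (p * Gamma m)
        + a\<^sup>2 * exp (- p * b\<^sup>2 / D) * lower_gamma m (q * y) / (p * (a\<^sup>2) powr m * Gamma m * D powr (1 - m)))"
    by (simp only: term_eq)
  moreover have "q * y = a\<^sup>2 * b\<^sup>2 / (2 * a\<^sup>2 + 4 * p)"
    by (simp add: q_D y_def D_def field_simps)
  ultimately show ?thesis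
    by (simp only: s_def y_def D_def)
qed

theorem lemma1:
  fixes a m b p :: real
  assumes "a \<noteq> 0" and "m > 0" and "b > 0" and "p > 0"
  shows "(LBINT x:{0<..}. marcum_Q m (a * sqrt x) b * exp (- p * x)) =
    upper_gamma m (b\<^sup>2 / 2) / (p * Gamma m) +
    a\<^sup>2 * exp (- p * b\<^sup>2 / (a\<^sup>2 + 2 * p)) * lower_gamma m (a\<^sup>2 * b\<^sup>2 / (2 * a\<^sup>2 + 4 * p))
      / (p * (a\<^sup>2) powr m * Gamma m * (a\<^sup>2 + 2 * p) powr (1 - m))"
  using laplace_marcum_Q_sums[OF assms] laplace_series_closed_form[OF assms] by (rule sums_unique2)

end
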